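(* Let $\Gamma$ be a pointclass defined for Polish spaces which is closed under continuous preimages. Let $x\in S^1$, $\overline{x}=(x,x,\ldots)\in T^\infty=\prod_{\omega}S^1$, and identify $\pi_1(T^\infty,\overline{x})$ with $\prod_\omega\mathbb{Z}$ via $\pi_1(T^\infty,\overline x)\cong\prod_\omega\pi_1(S^1,x)$ and a fixed generator of $\pi_1(S^1,x)\cong\mathbb{Z}$. Then a subgroup $G\le\prod_\omega\mathbb{Z}$ is in $\Gamma$ as a subset of the Polish group $\prod_\omega\mathbb{Z}$ (product of discrete groups) if and only if $G$ is $\Gamma$ as a subgroup of $\pi_1(T^\infty,\overline{x})$.
   Context: For a path connected Polish space $(X,d)$ and $x\in X$, $L_x$ is the Polish space of loops at $x$ with metric $\sup_s d(l_0(s),l_1(s))$. A subgroup $G\le\pi_1(X,x)$ is $\Gamma$ if the set of loops in $L_x$ whose homotopy classes lie in $G$ belongs to $\Gamma$ in $L_x$. *)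

theory Defs
  imports "HOL-Analysis.Analysis"
begin

text \<open>The infinite torus T^infinity = prod_omega S^1, realised inside the Polish space
  nat => complex (product topology; Function_Metric supplies a compatible metric dist).\<close>
definition torus_inf :: "(nat \<Rightarrow> complex) set" where
  "torus_inf = {a. \<forall>n. a n \<in> sphere 0 1}"

text \<open>Loops in X based at b, parametrised by [0,1]; outside [0,1] normalised to b,
  so that the sup-distance below is a genuine metric.\<close>
definition loops_at :: "'a::metric_space set \<Rightarrow> 'a \<Rightarrow> (real \<Rightarrow> 'a) set" where
  "loops_at X b = {l. path l \<and> path_image l \<subseteq> X \<and> pathstart l = b \<and> pathfinish l = b
                      \<and> (\<forall>s. s \<notin> {0..1} \<longrightarrow> l s = b)}"

definition loop_dist :: "(real \<Rightarrow> 'a::metric_space) \<Rightarrow> (real \<Rightarrow> 'a) \<Rightarrow> real" where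
  "loop_dist l m = (SUP s\<in>{0..1}. dist (l s) (m s))"

definition loop_space :: "'a::metric_space set \<Rightarrow> 'a \<Rightarrow> (real \<Rightarrow> 'a) topology" where
  "loop_space X b = Metric_space.mtopology (loops_at X b) loop_dist"

text \<open>The standard loop in T^infinity at (x,x,...) representing v in prod_omega Z:
  coordinatewise v n times the fixed generator s |-> x * exp(2 pi i s) of pi_1(S^1,x).\<close>
definition std_loop :: "complex \<Rightarrow> (nat \<Rightarrow> int) \<Rightarrow> real \<Rightarrow> nat \<Rightarrow> complex" where
  "std_loop x v = (\<lambda>s. if s \<in> {0..1} then (\<lambda>n. x * exp (2 * of_real pi * \<i> * of_int (v n) * of_real s))
                        else (\<lambda>n. x))"

definition preimage_closed :: "'a topology \<Rightarrow> 'b topology \<Rightarrow> 'a set set \<Rightarrow> 'b set set \<Rightarrow> bool" where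
  "preimage_closed X Y GX GY \<longleftrightarrow>
     (\<forall>f. continuous_map X Y f \<longrightarrow> (\<forall>A\<in>GY. {p \<in> topspace X. f p \<in> A} \<in> GX))"

definition int_seq_subgroup :: "(nat \<Rightarrow> int) set \<Rightarrow> bool" where
  "int_seq_subgroup G \<longleftrightarrow> (\<lambda>n. 0) \<in> G \<and> (\<forall>a\<in>G. \<forall>b\<in>G. (\<lambda>n. a n + b n) \<in> G)
      \<and> (\<forall>a\<in>G. (\<lambda>n. - a n) \<in> G)"

end

theory Submission
  imports Defs "HOL-Complex_Analysis.Complex_Analysis"
begin

(*
  The coordinatewise winding numbers give a map W from the loop space of T^infinity to
  prod_omega Z, continuous because sufficiently close loops have a given coordinate pointwise
  closer than 1, hence with equal winding number.  The standard loops give a continuous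
  map S back with W o S = id.  Since homotopy in a product is coordinatewise and loops on the
  circle are classified by their winding number, the loops whose class lies in G form exactly
  the preimage of G under W, and G is the preimage of that set under S.  Closure of the
  pointclass under continuous preimages between the two spaces gives both implications.
*)

lemma summable_dist_fun_terms:
  fixes d :: "nat \<Rightarrow> real"
  assumes "\<And>n. 0 \<le> d n"
  shows "summable (\<lambda>n. (1/2::real)^n * min (d n) 1)"
  by (rule summable_comparison_test'[of "\<lambda>n. (1/2::real)^n"])
     (auto simp: summable_geometric_iff assms)

lemma dist_fun_le_2: "dist (f :: 'a::countable \<Rightarrow> 'b::metric_space) g \<le> 2"
proof -
  have "dist f g \<le> (\<Sum>n. (1/2::real)^n)"
    unfolding dist_fun_def
    by (rule suminf_le) (auto intro: summable_dist_fun_terms simp: summable_geometric_iff)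
  also have "\<dots> = 2"
    using suminf_geometric[of "1/2::real"] by simp
  finally show ?thesis .
qed

lemma dist_fun_ge_component:
  "(1/2::real)^to_nat i * min (dist (f i) (g i)) 1 \<le> dist (f :: 'a::countable \<Rightarrow> 'b::metric_space) g"
proof -
  let ?term = "\<lambda>n. (1/2::real)^n * min (dist (f (from_nat n)) (g (from_nat n))) 1"
  have "sum ?term {to_nat i} \<le> suminf ?term"
    by (rule sum_le_suminf) (auto intro: summable_dist_fun_terms)
  then show ?thesis
    unfolding dist_fun_def by simp
qed

context
  fixes l m :: "real \<Rightarrow> 'a::countable \<Rightarrow> 'b::metric_space"
begin

lemma loop_dist_ge: "s \<in> {0..1} \<Longrightarrow> dist (l s) (m s) \<le> loop_dist l m"
  unfolding loop_dist_def by (rule cSUP_upper) (auto intro: bdd_aboveI[of _ 2] dist_fun_le_2)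

lemma loop_dist_le: "(\<And>s. s \<in> {0..1} \<Longrightarrow> dist (l s) (m s) \<le> c) \<Longrightarrow> loop_dist l m \<le> c"
  unfolding loop_dist_def by (rule cSUP_least) auto

end

text \<open>For loops in an arbitrary metric space the supremum defining loop_dist could be unbounded
  and hence junk; in a countable product the distances are bounded by 2.\<close>
lemma Metric_space_loop_dist:
  "Metric_space (loops_at X b) (loop_dist :: (real \<Rightarrow> 'a::countable \<Rightarrow> 'b::metric_space) \<Rightarrow> _)"
proof
  fix l m n :: "real \<Rightarrow> 'a \<Rightarrow> 'b"
  show "0 \<le> loop_dist l m"
    using order_trans[OF zero_le_dist loop_dist_ge, of 0 l m] by simp
  show "loop_dist l m = loop_dist m l"
    unfolding loop_dist_def by (simp add: dist_commute)
  show "loop_dist l n \<le> loop_dist l m + loop_dist m n"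
    by (rule loop_dist_le) (smt (verit) dist_triangle loop_dist_ge)
  assume l: "l \<in> loops_at X b" and m: "m \<in> loops_at X b"
  show "loop_dist l m = 0 \<longleftrightarrow> l = m"
  proof
    assume "loop_dist l m = 0"
    then have "l s = m s" for s
      using loop_dist_ge[of s l m] l m by (cases "s \<in> {0..1}") (auto simp: loops_at_def)
    then show "l = m" by blast
  next
    assume "l = m"
    then show "loop_dist l m = 0"
      using loop_dist_le[of l m 0] loop_dist_ge[of 0 l m] by force
  qed
qed

lemma topspace_loop_space:
  "topspace (loop_space X b) = loops_at X (b :: 'a::countable \<Rightarrow> 'b::metric_space)"
  unfolding loop_space_def by (simp add: Metric_space.topspace_mtopology[OF Metric_space_loop_dist])

lemma loops_at_coordinate:
  fixes l :: "real \<Rightarrow> 'a::countable \<Rightarrow> 'b::metric_space"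
  assumes "l \<in> loops_at {a. \<forall>i. a i \<in> S i} b"
  shows "(\<lambda>s. l s i) \<in> loops_at (S i) (b i)"
proof -
  have "path l"
    using assms by (simp add: loops_at_def)
  then have "path (\<lambda>s. l s i)"
    unfolding path_def by (rule continuous_on_product_then_coordinatewise)
  with assms show ?thesis
    by (auto simp: loops_at_def path_image_def pathstart_def pathfinish_def)
qed

lemma homotopic_loops_product_iff:
  fixes p q :: "real \<Rightarrow> 'i \<Rightarrow> 'a::topological_space"
  shows "homotopic_loops {a. \<forall>i. a i \<in> S i} p q \<longleftrightarrow>
         (\<forall>i. homotopic_loops (S i) (\<lambda>t. p t i) (\<lambda>t. q t i))"
proof
  assume pq: "homotopic_loops {a. \<forall>i. a i \<in> S i} p q"
  show "\<forall>i. homotopic_loops (S i) (\<lambda>t. p t i) (\<lambda>t. q t i)"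
  proof
    fix i
    have "homotopic_loops (S i) ((\<lambda>a. a i) \<circ> p) ((\<lambda>a. a i) \<circ> q)"
      by (rule homotopic_loops_continuous_image[OF pq])
         (auto intro: continuous_on_subset[OF continuous_on_product_coordinates])
    then show "homotopic_loops (S i) (\<lambda>t. p t i) (\<lambda>t. q t i)"
      by (simp add: o_def)
  qed
next
  assume "\<forall>i. homotopic_loops (S i) (\<lambda>t. p t i) (\<lambda>t. q t i)"
  then obtain h where h: "\<And>i. continuous_on ({0..1::real} \<times> {0..1}) (h i) \<and>
          h i \<in> ({0..1} \<times> {0..1}) \<rightarrow> S i \<and>
          (\<forall>t \<in> {0..1}. h i (0, t) = p t i) \<and>
          (\<forall>t \<in> {0..1}. h i (1, t) = q t i) \<and>
          (\<forall>u \<in> {0..1}. pathfinish (h i \<circ> Pair u) = pathstart (h i \<circ> Pair u))"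
    unfolding homotopic_loops by metis
  show "homotopic_loops {a. \<forall>i. a i \<in> S i} p q"
    unfolding homotopic_loops
  proof (intro exI conjI ballI)
    let ?H = "\<lambda>z i. h i z"
    show "continuous_on ({0..1::real} \<times> {0..1}) ?H"
      using h by (intro continuous_on_coordinatewise_then_product) blast
    show "?H \<in> ({0..1} \<times> {0..1}) \<rightarrow> {a. \<forall>i. a i \<in> S i}"
      using h by (auto simp: Pi_def)
    show "?H (0, t) = p t" "?H (1, t) = q t" if "t \<in> {0..1}" for t
      using h that by auto
    show "pathfinish (?H \<circ> Pair u) = pathstart (?H \<circ> Pair u)" if "u \<in> {0..1}" for u
      using h that by (auto simp: pathfinish_def pathstart_def fun_eq_iff)
  qed
qed

lemma homotopic_loops_sphere_iff_winding_number_eq: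
  fixes p q :: "real \<Rightarrow> complex"
  assumes "0 < r"
    and paths: "path p" "path q" and loops: "pathfinish p = pathstart p" "pathfinish q = pathstart q"
    and images: "path_image p \<subseteq> sphere a r" "path_image q \<subseteq> sphere a r"
  shows "homotopic_loops (sphere a r) p q \<longleftrightarrow> winding_number p a = winding_number q a"
proof
  assume "homotopic_loops (sphere a r) p q"
  then have "homotopic_loops (-{a}) p q"
    by (rule homotopic_loops_subset) (use \<open>0 < r\<close> in auto)
  then show "winding_number p a = winding_number q a"
    by (rule winding_number_homotopic_loops)
next
  assume "winding_number p a = winding_number q a"
  moreover have "a \<notin> path_image p" "a \<notin> path_image q"
    using images \<open>0 < r\<close> by auto
  ultimately have pq: "homotopic_loops (-{a}) p q"
    using winding_number_homotopic_loops_eq paths loops by blast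
  define \<rho> where "\<rho> w = a + of_real r * (w - a) / of_real (norm (w - a))" for w
  have "homotopic_loops (sphere a r) (\<rho> \<circ> p) (\<rho> \<circ> q)"
    by (rule homotopic_loops_continuous_image[OF pq])
       (use \<open>0 < r\<close> in \<open>auto simp: \<rho>_def dist_norm norm_divide norm_mult intro!: continuous_intros\<close>)
  moreover have "homotopic_loops (sphere a r) f (\<rho> \<circ> f)"
    if "path f" "path_image f \<subseteq> sphere a r" "pathfinish f = pathstart f" for f
  proof (rule homotopic_loops_eq[OF that])
    fix t :: real
    assume "t \<in> {0..1}"
    then have "f t \<in> sphere a r"
      using that(2) \<open>t \<in> {0..1}\<close> unfolding path_image_def by blast
    then have "norm (f t - a) = r"
      by (simp add: dist_norm norm_minus_commute)
    then show "f t = (\<rho> \<circ> f) t"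
      using \<open>0 < r\<close> by (simp add: \<rho>_def)
  qed
  ultimately show "homotopic_loops (sphere a r) p q"
    using paths loops images by (meson homotopic_loops_sym homotopic_loops_trans)
qed

definition winding_numbers :: "(real \<Rightarrow> nat \<Rightarrow> complex) \<Rightarrow> nat \<Rightarrow> int" where
  "winding_numbers l n = \<lfloor>Re (winding_number (\<lambda>s. l s n) 0)\<rfloor>"

lemma loops_at_torus_inf_coordinate:
  "l \<in> loops_at torus_inf b \<Longrightarrow> (\<lambda>s. l s n) \<in> loops_at (sphere 0 1) (b n)"
  unfolding torus_inf_def by (rule loops_at_coordinate)

lemma of_int_winding_numbers:
  assumes "l \<in> loops_at torus_inf b"
  shows "of_int (winding_numbers l n) = winding_number (\<lambda>s. l s n) 0"
proof -
  have "winding_number (\<lambda>s. l s n) 0 \<in> \<int>"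
    using loops_at_torus_inf_coordinate[OF assms, of n]
    by (intro integer_winding_number) (auto simp: loops_at_def)
  then show ?thesis
    by (auto simp: winding_numbers_def elim: Ints_cases)
qed

lemma homotopic_loops_torus_inf_iff:
  assumes l: "l \<in> loops_at torus_inf b" and m: "m \<in> loops_at torus_inf b"
  shows "homotopic_loops torus_inf l m \<longleftrightarrow> winding_numbers l = winding_numbers m"
proof -
  have "homotopic_loops (sphere 0 1) (\<lambda>s. l s n) (\<lambda>s. m s n) \<longleftrightarrow>
        winding_numbers l n = winding_numbers m n" for n
  proof -
    have "homotopic_loops (sphere 0 1) (\<lambda>s. l s n) (\<lambda>s. m s n) \<longleftrightarrow>
          winding_number (\<lambda>s. l s n) 0 = winding_number (\<lambda>s. m s n) 0"
      using loops_at_torus_inf_coordinate[OF l, of n] loops_at_torus_inf_coordinate[OF m, of n]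
      by (intro homotopic_loops_sphere_iff_winding_number_eq) (auto simp: loops_at_def)
    also have "\<dots> \<longleftrightarrow> winding_numbers l n = winding_numbers m n"
      by (simp flip: of_int_winding_numbers[OF l] of_int_winding_numbers[OF m])
    finally show ?thesis .
  qed
  then show ?thesis
    unfolding torus_inf_def homotopic_loops_product_iff by (simp add: fun_eq_iff)
qed

lemma std_loop_in_loops_at:
  assumes "x \<in> sphere 0 1"
  shows "std_loop x v \<in> loops_at torus_inf (\<lambda>n. x)"
proof -
  have "continuous_on {0..1} (\<lambda>s n. x * exp (2 * of_real pi * \<i> * of_int (v n) * of_real s))"
    by (intro continuous_intros)
  then have "path (std_loop x v)"
    unfolding path_def by (rule continuous_on_eq) (simp add: std_loop_def)
  moreover have "std_loop x v s \<in> torus_inf" for s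
    using assms by (auto simp: std_loop_def torus_inf_def norm_mult norm_exp_eq_Re)
  then have "path_image (std_loop x v) \<subseteq> torus_inf"
    unfolding path_image_def by blast
  moreover have "exp (2 * of_real pi * \<i> * of_int k) = 1" for k :: int
    using exp_integer_2pi[of "of_int k"] by (simp add: mult_ac)
  then have "pathstart (std_loop x v) = (\<lambda>n. x)" "pathfinish (std_loop x v) = (\<lambda>n. x)"
    by (simp_all add: pathstart_def pathfinish_def std_loop_def)
  ultimately show ?thesis
    by (simp add: loops_at_def std_loop_def)
qed

lemma winding_number_std_loop_coordinate:
  assumes "x \<in> sphere 0 1"
  shows "winding_number (\<lambda>s. std_loop x v s n) 0 = of_int (v n)"
proof -
  define p where "p s = (if s \<in> {0..1} then Ln x + 2 * of_real pi * \<i> * of_int (v n) * of_real s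
                         else Ln x)" for s
  have "continuous_on {0..1} (\<lambda>s. Ln x + 2 * of_real pi * \<i> * of_int (v n) * of_real s)"
    by (intro continuous_intros)
  then have "path p"
    unfolding path_def by (rule continuous_on_eq) (simp add: p_def)
  have "x \<noteq> 0"
    using assms by auto
  then have "exp \<circ> p = (\<lambda>s. std_loop x v s n)"
    by (auto simp: p_def std_loop_def exp_add fun_eq_iff)
  then have "winding_number (\<lambda>s. std_loop x v s n) 0 = (pathfinish p - pathstart p) / (2 * of_real pi * \<i>)"
    using winding_number_compose_exp[OF \<open>path p\<close>] by simp
  also have "\<dots> = of_int (v n)"
    by (simp add: p_def pathstart_def pathfinish_def)
  finally show ?thesis .
qed

lemma winding_numbers_std_loop:
  assumes "x \<in> sphere 0 1"
  shows "winding_numbers (std_loop x v) = v"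
proof
  fix n
  have "of_int (winding_numbers (std_loop x v) n) = (of_int (v n) :: complex)"
    using of_int_winding_numbers[OF std_loop_in_loops_at[OF assms]]
      winding_number_std_loop_coordinate[OF assms] by simp
  then show "winding_numbers (std_loop x v) n = v n"
    by (simp only: of_int_eq_iff)
qed

lemma winding_numbers_eq_if_loop_dist_less:
  assumes l: "l \<in> loops_at torus_inf b" and m: "m \<in> loops_at torus_inf b"
    and close: "loop_dist l m < (1/2)^to_nat n"
  shows "winding_numbers m n = winding_numbers l n"
proof -
  note L = loops_at_torus_inf_coordinate[OF l, of n]
  note M = loops_at_torus_inf_coordinate[OF m, of n]
  have "norm (m t n - l t n) < norm (l t n - 0)" if t: "t \<in> {0..1}" for t
  proof -
    have "(1/2)^to_nat n * min (dist (l t n) (m t n)) 1 \<le> loop_dist l m"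
      using dist_fun_ge_component loop_dist_ge[OF t] by (rule order_trans)
    with close have "(1/2)^to_nat n * min (dist (l t n) (m t n)) 1 < (1/2)^to_nat n * 1"
      by linarith
    then have "dist (l t n) (m t n) < 1"
      by (auto dest: mult_left_less_imp_less)
    moreover have "l t n \<in> sphere 0 1"
      using L t unfolding loops_at_def path_image_def by blast
    ultimately show ?thesis
      by (simp add: dist_norm norm_minus_commute)
  qed
  then have "winding_number (\<lambda>s. m s n) 0 = winding_number (\<lambda>s. l s n) 0"
    using L M by (intro winding_number_nearby_loops_eq) (auto simp: loops_at_def)
  then show ?thesis
    by (simp flip: of_int_winding_numbers[OF l] of_int_winding_numbers[OF m])
qed

lemma (in Metric_space) locally_constant_imp_continuous_map:
  fixes f :: "'a \<Rightarrow> 'b::discrete_topology"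
  assumes "\<And>x. x \<in> M \<Longrightarrow> \<exists>r>0. \<forall>y \<in> mball x r. f y = f x"
  shows "continuous_map mtopology euclidean f"
  unfolding continuous_map_def openin_mtopology
proof (intro conjI allI impI)
  fix U :: "'b set" and x
  assume "x \<in> {x \<in> topspace mtopology. f x \<in> U}"
  then have "x \<in> M" and fx: "f x \<in> U"
    by auto
  then obtain r where "r > 0" and r: "\<forall>y \<in> mball x r. f y = f x"
    using assms by blast
  have "mball x r \<subseteq> {x \<in> topspace mtopology. f x \<in> U}"
    using r fx by auto
  with \<open>r > 0\<close> show "\<exists>r>0. mball x r \<subseteq> {x \<in> topspace mtopology. f x \<in> U}"
    by blast
qed auto

lemma continuous_map_winding_numbers:
  "continuous_map (loop_space torus_inf b) euclidean winding_numbers"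
proof -
  interpret Metric_space "loops_at torus_inf b" loop_dist
    by (rule Metric_space_loop_dist)
  have "continuous_map mtopology euclidean (\<lambda>l. winding_numbers l n)" for n
    by (rule locally_constant_imp_continuous_map, rule exI[of _ "(1/2)^to_nat n"])
       (auto intro: winding_numbers_eq_if_loop_dist_less)
  then show ?thesis
    unfolding loop_space_def euclidean_product_topology[symmetric] continuous_map_componentwise_UNIV
    by simp
qed

lemma loop_dist_std_loop_le:
  assumes "\<And>k. k \<le> N \<Longrightarrow> v (from_nat k) = w (from_nat k)"
  shows "loop_dist (std_loop x v) (std_loop x w) \<le> (1/2)^N"
proof (rule loop_dist_le)
  fix s :: real
  assume "s \<in> {0..1}"
  then have "{dist (std_loop x v s (from_nat k)) (std_loop x w s (from_nat k)) | k. k \<le> N} = {0}"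
    using assms by (force simp: std_loop_def)
  then show "dist (std_loop x v s) (std_loop x w s) \<le> (1/2)^N"
    using dist_fun_le_dist_first_terms[of "std_loop x v s" "std_loop x w s" N] by simp
qed

lemma continuous_map_std_loop:
  assumes x: "x \<in> sphere 0 1"
  shows "continuous_map euclidean (loop_space torus_inf (\<lambda>n. x)) (std_loop x)"
proof -
  interpret Metric_space "loops_at torus_inf (\<lambda>n. x)" loop_dist
    by (rule Metric_space_loop_dist)
  have "open {v. std_loop x v \<in> U}" if U: "openin mtopology U" for U
  proof (subst open_subopen, intro ballI)
    fix v
    assume "v \<in> {v. std_loop x v \<in> U}"
    then obtain r where "r > 0" and r: "mball (std_loop x v) r \<subseteq> U"
      using U unfolding openin_mtopology by blast
    then obtain N where N: "(1/2::real)^N < r"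
      using real_arch_pow_inv[of r "1/2"] by auto
    define T :: "(nat \<Rightarrow> int) set" where "T = (\<Inter>k\<in>{..N}. (\<lambda>w. w (from_nat k)) -` {v (from_nat k)})"
    have "open T"
      unfolding T_def by (intro open_INT finite_atMost ballI open_vimage) (auto intro: open_discrete)
    moreover have "T \<subseteq> {v. std_loop x v \<in> U}"
    proof
      fix w
      assume "w \<in> T"
      then have "loop_dist (std_loop x v) (std_loop x w) \<le> (1/2)^N"
        by (intro loop_dist_std_loop_le) (simp add: T_def)
      then show "w \<in> {v. std_loop x v \<in> U}"
        using N r std_loop_in_loops_at[OF x] by fastforce
    qed
    moreover have "v \<in> T"
      by (simp add: T_def)
    ultimately show "\<exists>T. open T \<and> v \<in> T \<and> T \<subseteq> {v. std_loop x v \<in> U}"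
      by blast
  qed
  then show ?thesis
    unfolding continuous_map_def loop_space_def using std_loop_in_loops_at[OF x] by auto
qed

lemma preimage_closed_retraction_iff:
  assumes "preimage_closed X Y GX GY" and "preimage_closed Y X GY GX"
    and f: "continuous_map X Y f" and g: "continuous_map Y X g"
    and fg: "\<And>y. y \<in> topspace Y \<Longrightarrow> f (g y) = y" and A: "A \<subseteq> topspace Y"
  shows "A \<in> GY \<longleftrightarrow> {p \<in> topspace X. f p \<in> A} \<in> GX"
proof
  assume "A \<in> GY"
  then show "{p \<in> topspace X. f p \<in> A} \<in> GX"
    using assms(1) f unfolding preimage_closed_def by blast
next
  assume "{p \<in> topspace X. f p \<in> A} \<in> GX"
  then have "{y \<in> topspace Y. g y \<in> {p \<in> topspace X. f p \<in> A}} \<in> GY"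
    using assms(2) g unfolding preimage_closed_def by blast
  moreover have "{y \<in> topspace Y. g y \<in> {p \<in> topspace X. f p \<in> A}} = A"
    using A fg continuous_map_image_subset_topspace[OF g] by auto
  ultimately show "A \<in> GY"
    by simp
qed

theorem lemma5p1:
  fixes GammaL :: "(real \<Rightarrow> nat \<Rightarrow> complex) set set"
    and GammaZ :: "(nat \<Rightarrow> int) set set"
    and x :: complex and G :: "(nat \<Rightarrow> int) set"
  defines "TL \<equiv> loop_space torus_inf (\<lambda>n. x)"
      and "TZ \<equiv> (euclidean :: (nat \<Rightarrow> int) topology)"
  assumes "preimage_closed TL TL GammaL GammaL"
      and "preimage_closed TL TZ GammaL GammaZ"
      and "preimage_closed TZ TL GammaZ GammaL"
      and "preimage_closed TZ TZ GammaZ GammaZ"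
      and "x \<in> sphere 0 1"
      and "int_seq_subgroup G"
  shows "G \<in> GammaZ \<longleftrightarrow>
         {l \<in> loops_at torus_inf (\<lambda>n. x).
            \<exists>v\<in>G. homotopic_loops torus_inf l (std_loop x v)} \<in> GammaL"
proof -
  have x: "x \<in> sphere 0 1" and closed: "preimage_closed TL TZ GammaL GammaZ"
    "preimage_closed TZ TL GammaZ GammaL" by fact+
  have "{l \<in> loops_at torus_inf (\<lambda>n. x). \<exists>v\<in>G. homotopic_loops torus_inf l (std_loop x v)} =
        {l \<in> topspace TL. winding_numbers l \<in> G}"
    unfolding TL_def topspace_loop_space
    using homotopic_loops_torus_inf_iff[OF _ std_loop_in_loops_at[OF x]] winding_numbers_std_loop[OF x]
    by auto
  moreover have "G \<in> GammaZ \<longleftrightarrow> {l \<in> topspace TL. winding_numbers l \<in> G} \<in> GammaL"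
    using closed continuous_map_winding_numbers continuous_map_std_loop[OF x]
      winding_numbers_std_loop[OF x]
    unfolding TL_def TZ_def by (intro preimage_closed_retraction_iff) auto
  ultimately show ?thesis
    by simp
qed

end
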